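(* Let $G$ and $H$ be decision structures. Then $G$ and $H$ are structurally equivalent if and only if they are isomorphic as arc-labelled graphs, i.e. there is a bijection $\Gamma:N(G)\to N(H)$ such that for all $u,v\in N(G)$ we have $(u,v)\in A(G)$ iff $(\Gamma(u),\Gamma(v))\in A(H)$, and in that case $\ell_G(u,v)=\ell_H(\Gamma(u),\Gamma(v))$.
   Context: Fix a nonempty set $\mathbb{W}$ of states, a set $\mathbb{S}$ of signals with at least two elements, and a set $\mathcal{R}$ of return values. An action is a pair $\alpha=(\alpha_B,\alpha_R)$ of functions $\alpha_B:\mathbb{W}\to\mathbb{S}$ and $\alpha_R:\mathbb{W}\to\mathcal{R}$; $\mathcal{A}$ denotes the set of all actions. A decision structure is a finite directed acyclic graph $Z=(N,A)$, $A\subseteq N\times N$, with a unique source (node with no incoming arc), together with an arc labelling $\ell:A\to\mathcal{R}$ and a node labelling $\eta:N\to\mathcal{A}$, such that distinct arcs leaving the same node have distinct labels; the arc out of $v$ labelled $r$, if it exists, is called the $r$-arc out of $v$. For a state $w$, the action $Z(w)$ selected by $Z$ is obtained as follows: start at the source; at the current node $v$ with $\eta(v)=\alpha$, if the $\alpha_R(w)$-arc out of $v$ exists move to its head and repeat, otherwise output $\alpha$. Two decision structures $G,H$ are structurally equivalent if they have the same number $n$ of nodes and there are enumerations $g_1,\dots,g_n$ of $N(G)$ and $h_1,\dots,h_n$ of $N(H)$ such that for every choice of actions $\alpha_1,\dots,\alpha_n$, relabelling $g_i$ and $h_i$ by $\alpha_i$ for all $i$ yields $G(w)=H(w)$ for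 every state $w$ (the original node labels play no role). It is assumed that $\mathcal{R}$ contains at least one value that does not label any arc of $G$ or $H$. *)

theory Defs
  imports Main
begin

text \<open>An action: a pair of functions from states to signals and to return values.\<close>
type_synonym ('w,'s,'r) action = "('w \<Rightarrow> 's) \<times> ('w \<Rightarrow> 'r)"

record ('n,'w,'s,'r) dstruct =
  nodes :: "'n set"
  arcs  :: "('n \<times> 'n) set"
  lab   :: "'n \<times> 'n \<Rightarrow> 'r"
  act   :: "'n \<Rightarrow> ('w,'s,'r) action"

definition is_source :: "('n,'w,'s,'r) dstruct \<Rightarrow> 'n \<Rightarrow> bool" where
  "is_source Z s \<longleftrightarrow> s \<in> nodes Z \<and> (\<forall>v. (v, s) \<notin> arcs Z)"

definition decision_structure :: "('n,'w,'s,'r) dstruct \<Rightarrow> bool" where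
  "decision_structure Z \<longleftrightarrow>
     finite (nodes Z) \<and>
     arcs Z \<subseteq> nodes Z \<times> nodes Z \<and>
     acyclic (arcs Z) \<and>
     (\<exists>!s. is_source Z s) \<and>
     (\<forall>v u1 u2. (v, u1) \<in> arcs Z \<longrightarrow> (v, u2) \<in> arcs Z \<longrightarrow> u1 \<noteq> u2
        \<longrightarrow> lab Z (v, u1) \<noteq> lab Z (v, u2))"

definition source :: "('n,'w,'s,'r) dstruct \<Rightarrow> 'n" where
  "source Z = (THE s. is_source Z s)"

inductive selects :: "('n,'w,'s,'r) dstruct \<Rightarrow> 'w \<Rightarrow> 'n \<Rightarrow> ('w,'s,'r) action \<Rightarrow> bool"
  for Z w where
  stop: "\<not> (\<exists>u. (v, u) \<in> arcs Z \<and> lab Z (v, u) = snd (act Z v) w)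
         \<Longrightarrow> selects Z w v (act Z v)"
| move: "(v, u) \<in> arcs Z \<Longrightarrow> lab Z (v, u) = snd (act Z v) w
         \<Longrightarrow> selects Z w u \<alpha> \<Longrightarrow> selects Z w v \<alpha>"

definition selected :: "('n,'w,'s,'r) dstruct \<Rightarrow> 'w \<Rightarrow> ('w,'s,'r) action" where
  "selected Z w = (THE \<alpha>. selects Z w (source Z) \<alpha>)"

text \<open>Structural equivalence: enumerations g_1..g_n, h_1..h_n (as bijections from
  {0..<n}) such that every relabelling g_i, h_i \<mapsto> \<alpha>_i gives equal selected actions.\<close>
definition struct_equiv :: "('g,'w,'s,'r) dstruct \<Rightarrow> ('h,'w,'s,'r) dstruct \<Rightarrow> bool" where
  "struct_equiv G H \<longleftrightarrow>
     card (nodes G) = card (nodes H) \<and>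
     (\<exists>g h. bij_betw g {..<card (nodes G)} (nodes G) \<and>
            bij_betw h {..<card (nodes G)} (nodes H) \<and>
            (\<forall>\<alpha> :: nat \<Rightarrow> ('w,'s,'r) action. \<forall>w.
               selected (G\<lparr>act := (\<lambda>v. \<alpha> (inv_into {..<card (nodes G)} g v))\<rparr>) w =
               selected (H\<lparr>act := (\<lambda>v. \<alpha> (inv_into {..<card (nodes G)} h v))\<rparr>) w))"

definition arc_iso :: "('g,'w,'s,'r) dstruct \<Rightarrow> ('h,'w,'s,'r) dstruct \<Rightarrow> bool" where
  "arc_iso G H \<longleftrightarrow>
     (\<exists>\<Gamma>. bij_betw \<Gamma> (nodes G) (nodes H) \<and>
        (\<forall>u\<in>nodes G. \<forall>v\<in>nodes G.
           ((u, v) \<in> arcs G \<longleftrightarrow> (\<Gamma> u, \<Gamma> v) \<in> arcs H) \<and>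
           ((u, v) \<in> arcs G \<longrightarrow> lab G (u, v) = lab H (\<Gamma> u, \<Gamma> v))))"

end

theory Submission
  imports Defs
begin

text \<open>Only the return values steer the walk through a decision structure; the signals
  merely tag where it ends. With two distinct signals one can tag a single node, so
  structural equivalence says precisely that the bijection g_i \<mapsto> h_i maps the
  endpoint of every walk in G to the endpoint of the corresponding walk in H.

  Endpoints in turn determine the labelled arcs. Let r0 be a value labelling no arc. A
  node x lies on the walk of a return-value assignment f iff the walk of f(x := r0) ends
  at x. Take f whose walk ends at u and whose values other than r0 all sit on that walk;
  then the walk of f(u := l) ends at v \<noteq> u iff there is an arc u \<rightarrow> v labelled l. Hence
  endpoint-preserving bijections are exactly the isomorphisms of arc-labelled graphs.\<close>

section \<open>Walks\<close>

definition walk_step :: "('n,'w,'s,'r) dstruct \<Rightarrow> ('n \<Rightarrow> 'r) \<Rightarrow> ('n \<times> 'n) set" where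
  "walk_step Z f = {(x, y). (x, y) \<in> arcs Z \<and> lab Z (x, y) = f x}"

definition walk_end :: "('n,'w,'s,'r) dstruct \<Rightarrow> ('n \<Rightarrow> 'r) \<Rightarrow> 'n \<Rightarrow> bool" where
  "walk_end Z f z \<longleftrightarrow> (source Z, z) \<in> (walk_step Z f)\<^sup>* \<and> z \<notin> Domain (walk_step Z f)"

lemma walk_step_subset_arcs: "walk_step Z f \<subseteq> arcs Z"
  by (auto simp: walk_step_def)

lemma walk_step_act_update [simp]: "walk_step (Z\<lparr>act := a\<rparr>) f = walk_step Z f"
  by (simp add: walk_step_def)

lemma source_act_update [simp]: "source (Z\<lparr>act := a\<rparr>) = source Z"
  by (simp add: source_def is_source_def)

lemma walk_end_act_update [simp]: "walk_end (Z\<lparr>act := a\<rparr>) f z = walk_end Z f z"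
  by (simp add: walk_end_def)

lemma decision_structure_act_update [simp]:
  "decision_structure (Z\<lparr>act := a\<rparr>) = decision_structure Z"
  by (simp add: decision_structure_def is_source_def)

lemma is_source_source: "decision_structure Z \<Longrightarrow> is_source Z (source Z)"
  unfolding decision_structure_def source_def by (metis theI')

lemma arcs_subset_nodes: "decision_structure Z \<Longrightarrow> arcs Z \<subseteq> nodes Z \<times> nodes Z"
  by (simp add: decision_structure_def)

lemma source_eqI:
  assumes "decision_structure Z" and "is_source Z s"
  shows "source Z = s"
proof -
  have "\<exists>!s. is_source Z s" using assms(1) by (simp add: decision_structure_def)
  then show ?thesis unfolding source_def using assms(2) by (rule the1_equality)
qed

lemma source_in_nodes: "decision_structure Z \<Longrightarrow> source Z \<in> nodes Z"
  using is_source_source[of Z] unfolding is_source_def by simp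

lemma arc_in_nodes:
  "decision_structure Z \<Longrightarrow> (u, v) \<in> arcs Z \<Longrightarrow> u \<in> nodes Z \<and> v \<in> nodes Z"
  using arcs_subset_nodes by blast

lemma arc_labels_distinct:
  assumes "decision_structure Z" and "(v, u1) \<in> arcs Z" "(v, u2) \<in> arcs Z"
    and "lab Z (v, u1) = lab Z (v, u2)"
  shows "u1 = u2"
proof -
  have "\<forall>v u1 u2. (v, u1) \<in> arcs Z \<longrightarrow> (v, u2) \<in> arcs Z \<longrightarrow> u1 \<noteq> u2
      \<longrightarrow> lab Z (v, u1) \<noteq> lab Z (v, u2)"
    using assms(1) by (simp add: decision_structure_def)
  with assms(2-4) show ?thesis by blast
qed

lemma finite_nodes: "decision_structure Z \<Longrightarrow> finite (nodes Z)"
  by (simp add: decision_structure_def)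

lemma finite_arcs: "decision_structure Z \<Longrightarrow> finite (arcs Z)"
  by (rule finite_subset[OF arcs_subset_nodes]) (simp_all add: finite_nodes)

lemma acyclic_arcs: "decision_structure Z \<Longrightarrow> acyclic (arcs Z)"
  unfolding decision_structure_def by simp

lemma arcs_trancl_irrefl: "decision_structure Z \<Longrightarrow> (x, x) \<notin> (arcs Z)\<^sup>+"
  unfolding decision_structure_def acyclic_def by simp

lemma arcs_cycle_free:
  assumes "decision_structure Z" "(u, v) \<in> arcs Z" "(v, u) \<in> (arcs Z)\<^sup>*"
  shows False
  using arcs_trancl_irrefl[OF assms(1)] rtrancl_into_trancl2[OF assms(2,3)] by simp

lemma source_reaches_nodes:
  assumes Z: "decision_structure Z" and "u \<in> nodes Z"
  shows "(source Z, u) \<in> (arcs Z)\<^sup>*"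
  using \<open>u \<in> nodes Z\<close>
proof (induction u rule: wf_induct[OF finite_acyclic_wf[OF finite_arcs[OF Z] acyclic_arcs[OF Z]]])
  case (1 u)
  show ?case
  proof (cases "\<exists>v. (v, u) \<in> arcs Z")
    case True
    then obtain v where vu: "(v, u) \<in> arcs Z" by blast
    then have "(source Z, v) \<in> (arcs Z)\<^sup>*" using 1 arc_in_nodes[OF Z] by blast
    with vu show ?thesis by simp
  next
    case False
    with 1 have "is_source Z u" by (simp add: is_source_def)
    then show ?thesis using source_eqI[OF Z] by simp
  qed
qed

lemma walk_step_cong:
  assumes "decision_structure Z" and "\<forall>x\<in>nodes Z. f x = g x"
  shows "walk_step Z f = walk_step Z g"
  using assms(2) by (auto simp: walk_step_def dest: arc_in_nodes[OF assms(1)])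

lemma walk_end_cong:
  assumes "decision_structure Z" and "\<forall>x\<in>nodes Z. f x = g x"
  shows "walk_end Z f z \<longleftrightarrow> walk_end Z g z"
  using walk_step_cong[OF assms] by (simp add: walk_end_def)

lemma single_valued_walk_step:
  assumes "decision_structure Z"
  shows "single_valued (walk_step Z f)"
proof (rule single_valuedI)
  fix x y z
  assume "(x, y) \<in> walk_step Z f" "(x, z) \<in> walk_step Z f"
  then have "(x, y) \<in> arcs Z" "(x, z) \<in> arcs Z" "lab Z (x, y) = lab Z (x, z)"
    by (simp_all add: walk_step_def)
  then show "y = z" by (rule arc_labels_distinct[OF assms])
qed

lemma walk_reaches_walk_end:
  assumes Z: "decision_structure Z" and "walk_end Z f z"
    and "(source Z, x) \<in> (walk_step Z f)\<^sup>*"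
  shows "(x, z) \<in> (walk_step Z f)\<^sup>*"
proof -
  have "(source Z, z) \<in> (walk_step Z f)\<^sup>*" and z: "z \<notin> Domain (walk_step Z f)"
    using assms(2) by (simp_all add: walk_end_def)
  then have "(x, z) \<in> (walk_step Z f)\<^sup>* \<or> (z, x) \<in> (walk_step Z f)\<^sup>*"
    using single_valued_confluent[OF single_valued_walk_step[OF Z] assms(3)] by blast
  moreover have "x = z" if "(z, x) \<in> (walk_step Z f)\<^sup>*"
    using that z by (cases rule: converse_rtranclE) blast+
  ultimately show ?thesis by blast
qed

lemma walk_end_unique:
  assumes Z: "decision_structure Z" and "walk_end Z f z" and "walk_end Z f z'"
  shows "z = z'"
proof -
  have "(z, z') \<in> (walk_step Z f)\<^sup>*"
    using walk_reaches_walk_end[OF Z assms(3)] assms(2) by (simp add: walk_end_def)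
  then show ?thesis
    using assms(2) by (cases rule: converse_rtranclE) (auto simp: walk_end_def)
qed

lemma walk_end_exists:
  assumes Z: "decision_structure Z"
  shows "\<exists>z. walk_end Z f z"
proof -
  have "\<exists>z. (x, z) \<in> (walk_step Z f)\<^sup>* \<and> z \<notin> Domain (walk_step Z f)" for x
  proof (induction x rule: wf_induct[OF finite_acyclic_wf_converse[OF finite_arcs[OF Z] acyclic_arcs[OF Z]]])
    case (1 x)
    show ?case
    proof (cases "x \<in> Domain (walk_step Z f)")
      case True
      then obtain y where xy: "(x, y) \<in> walk_step Z f" by blast
      then have "(y, x) \<in> (arcs Z)\<inverse>" using walk_step_subset_arcs by blast
      with 1 obtain z where "(y, z) \<in> (walk_step Z f)\<^sup>*" "z \<notin> Domain (walk_step Z f)"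
        by blast
      with xy show ?thesis by (blast intro: converse_rtrancl_into_rtrancl)
    qed blast
  qed
  then show ?thesis by (auto simp: walk_end_def)
qed

lemma walk_end_in_nodes:
  assumes Z: "decision_structure Z" and "walk_end Z f z"
  shows "z \<in> nodes Z"
proof -
  have "(source Z, z) \<in> (walk_step Z f)\<^sup>*" using assms(2) by (simp add: walk_end_def)
  then show ?thesis
  proof (cases rule: rtranclE)
    case (step y)
    then show ?thesis using walk_step_subset_arcs arc_in_nodes[OF Z] by blast
  qed (use source_in_nodes[OF Z] in simp)
qed

lemma walk_end_if_unlabelled:
  "(source Z, z) \<in> (walk_step Z f)\<^sup>* \<Longrightarrow> f z \<notin> lab Z ` arcs Z \<Longrightarrow> walk_end Z f z"
  by (force simp: walk_end_def walk_step_def)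

lemma walk_reaches_fun_upd:
  assumes Z: "decision_structure Z" and "(source Z, x) \<in> (walk_step Z f)\<^sup>*"
    and "(x, y) \<in> (arcs Z)\<^sup>*"
  shows "(source Z, x) \<in> (walk_step Z (f(y := r)))\<^sup>*"
  using assms(2,3)
proof (induction rule: rtrancl_induct)
  case (step a b)
  have ab: "(a, b) \<in> arcs Z" using step.hyps(2) walk_step_subset_arcs by blast
  then have "a \<noteq> y" using arcs_cycle_free[OF Z] step.prems by blast
  then have "(a, b) \<in> walk_step Z (f(y := r))" using step.hyps(2) by (simp add: walk_step_def)
  moreover have "(a, y) \<in> (arcs Z)\<^sup>*" using ab step.prems by (rule converse_rtrancl_into_rtrancl)
  ultimately show ?case using step.IH by (blast intro: rtrancl_into_rtrancl)
qed simp

lemma selects_walk_end: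
  assumes "(v, z) \<in> (walk_step Z (\<lambda>x. snd (act Z x) w))\<^sup>*"
    and "z \<notin> Domain (walk_step Z (\<lambda>x. snd (act Z x) w))"
  shows "selects Z w v (act Z z)"
  using assms
proof (induction rule: converse_rtrancl_induct)
  case base
  then show ?case by (intro selects.stop) (auto simp: walk_step_def)
next
  case (step y y')
  then show ?case by (intro selects.move[of y y']) (auto simp: walk_step_def)
qed

lemma selects_imp_walk_end:
  assumes "selects Z w v \<alpha>"
  shows "\<exists>z. (v, z) \<in> (walk_step Z (\<lambda>x. snd (act Z x) w))\<^sup>*
           \<and> z \<notin> Domain (walk_step Z (\<lambda>x. snd (act Z x) w)) \<and> \<alpha> = act Z z"
  using assms
proof (induction rule: selects.induct)
  case (stop v)
  then show ?case by (auto simp: walk_step_def)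
next
  case (move v u \<alpha>)
  then have "(v, u) \<in> walk_step Z (\<lambda>x. snd (act Z x) w)" by (simp add: walk_step_def)
  with move.IH show ?case by (blast intro: converse_rtrancl_into_rtrancl)
qed

lemma selected_eq_walk_end:
  assumes Z: "decision_structure Z" and "walk_end Z (\<lambda>x. snd (act Z x) w) z"
  shows "selected Z w = act Z z"
  unfolding selected_def
proof (rule the_equality)
  show "selects Z w (source Z) (act Z z)"
    using assms(2) by (simp add: walk_end_def selects_walk_end)
next
  fix \<alpha> assume "selects Z w (source Z) \<alpha>"
  then obtain z' where "walk_end Z (\<lambda>x. snd (act Z x) w) z'" "\<alpha> = act Z z'"
    unfolding walk_end_def by (blast dest: selects_imp_walk_end)
  then show "\<alpha> = act Z z" using walk_end_unique[OF Z] assms(2) by blast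
qed

section \<open>Labelled arcs from walk endpoints\<close>

text \<open>Since x lies on the walk of f iff the walk of f(x := r0) ends at x, this says that
  every node where f differs from r0 lies on the walk of f.\<close>

definition walk_covers :: "('n,'w,'s,'r) dstruct \<Rightarrow> 'r \<Rightarrow> ('n \<Rightarrow> 'r) \<Rightarrow> bool" where
  "walk_covers Z r0 f \<longleftrightarrow> (\<forall>x\<in>nodes Z. f x \<noteq> r0 \<longrightarrow> walk_end Z (f(x := r0)) x)"

lemma walk_end_fun_upd_unlabelled:
  assumes Z: "decision_structure Z" and r0: "r0 \<notin> lab Z ` arcs Z"
    and "(source Z, x) \<in> (walk_step Z f)\<^sup>*"
  shows "walk_end Z (f(x := r0)) x"
  using walk_reaches_fun_upd[OF Z assms(3)] r0 by (simp add: walk_end_if_unlabelled)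

lemma walk_covers_visited:
  assumes Z: "decision_structure Z" and "walk_covers Z r0 f" and "walk_end Z f u"
    and "x \<in> nodes Z" and "f x \<noteq> r0"
  shows "(x, u) \<in> (walk_step Z f)\<^sup>*"
proof -
  have "(source Z, x) \<in> (walk_step Z (f(x := r0)))\<^sup>*"
    using assms(2,4,5) by (simp add: walk_covers_def walk_end_def)
  then have "(source Z, x) \<in> (walk_step Z ((f(x := r0))(x := f x)))\<^sup>*"
    by (rule walk_reaches_fun_upd[OF Z]) simp
  then show ?thesis using walk_reaches_walk_end[OF Z assms(3)] by simp
qed

lemma walk_end_extend:
  assumes Z: "decision_structure Z" and r0: "r0 \<notin> lab Z ` arcs Z"
    and cov: "walk_covers Z r0 f" and u: "walk_end Z f u" and uv: "(u, v) \<in> arcs Z"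
  shows "walk_end Z (f(u := lab Z (u, v))) v"
proof -
  let ?f = "f(u := lab Z (u, v))"
  have "(source Z, u) \<in> (walk_step Z ?f)\<^sup>*"
    using u by (intro walk_reaches_fun_upd[OF Z]) (simp_all add: walk_end_def)
  moreover have "(u, v) \<in> walk_step Z ?f" using uv by (simp add: walk_step_def)
  ultimately have reach_v: "(source Z, v) \<in> (walk_step Z ?f)\<^sup>*" by simp
  have "v \<noteq> u" using uv arcs_trancl_irrefl[OF Z] by blast
  moreover have "f v = r0"
  proof (rule ccontr)
    assume "f v \<noteq> r0"
    then have "(v, u) \<in> (walk_step Z f)\<^sup>*"
      using walk_covers_visited[OF Z cov u] arc_in_nodes[OF Z uv] by blast
    then have "(v, u) \<in> (arcs Z)\<^sup>*" using rtrancl_mono[OF walk_step_subset_arcs] by blast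
    then show False using arcs_cycle_free[OF Z uv] by blast
  qed
  ultimately show ?thesis using walk_end_if_unlabelled[OF reach_v] r0 by simp
qed

lemma walk_covers_fun_upd:
  assumes Z: "decision_structure Z" and r0: "r0 \<notin> lab Z ` arcs Z"
    and cov: "walk_covers Z r0 f" and u: "walk_end Z f u"
  shows "walk_covers Z r0 (f(u := l))"
  unfolding walk_covers_def
proof (intro ballI impI)
  fix x assume x: "x \<in> nodes Z" and "(f(u := l)) x \<noteq> r0"
  show "walk_end Z ((f(u := l))(x := r0)) x"
  proof (cases "x = u")
    case True
    then show ?thesis
      using walk_end_fun_upd_unlabelled[OF Z r0, of u f] u by (simp add: walk_end_def)
  next
    case False
    with \<open>(f(u := l)) x \<noteq> r0\<close> have "f x \<noteq> r0" by simp
    then have "(source Z, x) \<in> (walk_step Z (f(x := r0)))\<^sup>*"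
      using cov x by (simp add: walk_covers_def walk_end_def)
    moreover have "(x, u) \<in> (arcs Z)\<^sup>*"
      using walk_covers_visited[OF Z cov u x \<open>f x \<noteq> r0\<close>]
        rtrancl_mono[OF walk_step_subset_arcs] by blast
    ultimately have "(source Z, x) \<in> (walk_step Z ((f(x := r0))(u := l)))\<^sup>*"
      by (rule walk_reaches_fun_upd[OF Z])
    then show ?thesis
      using False r0 walk_end_if_unlabelled by (metis fun_upd_other fun_upd_same fun_upd_twist)
  qed
qed

lemma walk_covers_end_exists:
  assumes Z: "decision_structure Z" and r0: "r0 \<notin> lab Z ` arcs Z" and "u \<in> nodes Z"
  shows "\<exists>f. walk_covers Z r0 f \<and> walk_end Z f u"
  using source_reaches_nodes[OF Z assms(3)]
proof (induction rule: rtrancl_induct)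
  case base
  have "walk_end Z (\<lambda>_. r0) (source Z)" using r0 by (simp add: walk_end_if_unlabelled)
  then show ?case by (auto simp: walk_covers_def)
next
  case (step u v)
  then obtain f where "walk_covers Z r0 f" "walk_end Z f u" by blast
  then show ?case
    using walk_covers_fun_upd[OF Z r0] walk_end_extend[OF Z r0 _ _ step.hyps(2)] by blast
qed

theorem arc_iff_walk_ends:
  assumes Z: "decision_structure Z" and r0: "r0 \<notin> lab Z ` arcs Z"
  shows "(u, v) \<in> arcs Z \<and> lab Z (u, v) = l \<longleftrightarrow>
    (\<exists>f. walk_covers Z r0 f \<and> walk_end Z f u \<and> walk_end Z (f(u := l)) v \<and> v \<noteq> u)"
proof
  assume "(u, v) \<in> arcs Z \<and> lab Z (u, v) = l"
  then have uv: "(u, v) \<in> arcs Z" and l: "l = lab Z (u, v)" by simp_all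
  obtain f where "walk_covers Z r0 f" "walk_end Z f u"
    using walk_covers_end_exists[OF Z r0] arc_in_nodes[OF Z uv] by blast
  moreover have "v \<noteq> u" using uv arcs_trancl_irrefl[OF Z] by blast
  ultimately show "\<exists>f. walk_covers Z r0 f \<and> walk_end Z f u \<and> walk_end Z (f(u := l)) v \<and> v \<noteq> u"
    using walk_end_extend[OF Z r0 _ _ uv] l by blast
next
  assume "\<exists>f. walk_covers Z r0 f \<and> walk_end Z f u \<and> walk_end Z (f(u := l)) v \<and> v \<noteq> u"
  then obtain f where cov: "walk_covers Z r0 f" and u: "walk_end Z f u"
    and v: "walk_end Z (f(u := l)) v" and "v \<noteq> u" by blast
  let ?R = "walk_step Z (f(u := l))"
  have "(source Z, u) \<in> ?R\<^sup>*"
    using u by (intro walk_reaches_fun_upd[OF Z]) (simp_all add: walk_end_def)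
  then have "(u, v) \<in> ?R\<^sup>*" by (rule walk_reaches_walk_end[OF Z v])
  with \<open>v \<noteq> u\<close> obtain y where uy: "(u, y) \<in> ?R" and yv: "(y, v) \<in> ?R\<^sup>*"
    by (auto elim: converse_rtranclE)
  have uy_arc: "(u, y) \<in> arcs Z" using uy walk_step_subset_arcs by blast
  have "y \<noteq> u" using uy_arc arcs_trancl_irrefl[OF Z] by blast
  moreover have "f y = r0"
  proof (rule ccontr)
    assume "f y \<noteq> r0"
    then have "(y, u) \<in> (walk_step Z f)\<^sup>*"
      using walk_covers_visited[OF Z cov u] arc_in_nodes[OF Z uy_arc] by blast
    then have "(y, u) \<in> (arcs Z)\<^sup>*" using rtrancl_mono[OF walk_step_subset_arcs] by blast
    then show False using arcs_cycle_free[OF Z uy_arc] by blast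
  qed
  ultimately have "y \<notin> Domain ?R" using r0 by (force simp: walk_step_def)
  with yv have "y = v" by (auto elim: converse_rtranclE)
  then show "(u, v) \<in> arcs Z \<and> lab Z (u, v) = l" using uy by (simp add: walk_step_def)
qed

section \<open>Endpoint-preserving bijections\<close>

definition preserves_walk_ends ::
    "('g \<Rightarrow> 'h) \<Rightarrow> ('g,'w,'s,'r) dstruct \<Rightarrow> ('h,'w,'s,'r) dstruct \<Rightarrow> bool" where
  "preserves_walk_ends \<Gamma> G H \<longleftrightarrow>
     (\<forall>f f'. (\<forall>x\<in>nodes G. f' (\<Gamma> x) = f x) \<longrightarrow>
        (\<forall>x\<in>nodes G. walk_end G f x \<longleftrightarrow> walk_end H f' (\<Gamma> x)))"

lemma preserves_walk_endsD:
  "preserves_walk_ends \<Gamma> G H \<Longrightarrow> \<forall>x\<in>nodes G. f' (\<Gamma> x) = f x \<Longrightarrow> x \<in> nodes G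
    \<Longrightarrow> walk_end G f x \<longleftrightarrow> walk_end H f' (\<Gamma> x)"
  unfolding preserves_walk_ends_def by blast

lemma preserves_walk_endsI:
  fixes G :: "('g,'w,'s,'r) dstruct" and H :: "('h,'w,'s,'r) dstruct"
  assumes G: "decision_structure G" and H: "decision_structure H"
    and bij: "bij_betw \<Gamma> (nodes G) (nodes H)"
    and transfer: "\<And>(f :: 'g \<Rightarrow> 'r) (f' :: 'h \<Rightarrow> 'r) x. \<forall>x\<in>nodes G. f' (\<Gamma> x) = f x \<Longrightarrow> walk_end G f x
      \<Longrightarrow> walk_end H f' (\<Gamma> x)"
  shows "preserves_walk_ends \<Gamma> G H"
  unfolding preserves_walk_ends_def
proof (intro allI impI ballI iffI)
  fix f :: "'g \<Rightarrow> 'r" and f' :: "'h \<Rightarrow> 'r" and x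
  assume agree: "\<forall>x\<in>nodes G. f' (\<Gamma> x) = f x" and "x \<in> nodes G"
  show "walk_end G f x \<Longrightarrow> walk_end H f' (\<Gamma> x)" using transfer[OF agree] .
  assume x_end: "walk_end H f' (\<Gamma> x)"
  obtain z where z: "walk_end G f z" using walk_end_exists[OF G] by blast
  then have "\<Gamma> z = \<Gamma> x" using transfer[OF agree z] x_end walk_end_unique[OF H] by blast
  then show "walk_end G f x"
    using z walk_end_in_nodes[OF G z] \<open>x \<in> nodes G\<close> bij by (metis bij_betw_iff_bijections)
qed

lemma agree_fun_upd:
  assumes "inj_on \<Gamma> A" and "x \<in> A" and "\<forall>z\<in>A. f' (\<Gamma> z) = f z"
  shows "\<forall>z\<in>A. (f'(\<Gamma> x := c)) (\<Gamma> z) = (f(x := c)) z"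
  using assms by (auto simp: inj_on_eq_iff)

lemma preserves_walk_ends_inv:
  fixes G :: "('g,'w,'s,'r) dstruct" and H :: "('h,'w,'s,'r) dstruct"
  assumes bij: "bij_betw \<Gamma> (nodes G) (nodes H)" and pres: "preserves_walk_ends \<Gamma> G H"
  shows "preserves_walk_ends (inv_into (nodes G) \<Gamma>) H G"
  unfolding preserves_walk_ends_def
proof (intro allI impI ballI)
  fix f :: "'h \<Rightarrow> 'r" and f' :: "'g \<Rightarrow> 'r" and y
  assume agree: "\<forall>y\<in>nodes H. f' (inv_into (nodes G) \<Gamma> y) = f y" and y: "y \<in> nodes H"
  have "\<forall>x\<in>nodes G. f (\<Gamma> x) = f' x"
    using agree bij by (metis bij_betw_apply bij_betw_inv_into_left)
  note ends = preserves_walk_endsD[OF pres this]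
  moreover have "inv_into (nodes G) \<Gamma> y \<in> nodes G" "\<Gamma> (inv_into (nodes G) \<Gamma> y) = y"
    using bij y by (auto simp: bij_betw_def inv_into_into f_inv_into_f)
  then show "walk_end H f y \<longleftrightarrow> walk_end G f' (inv_into (nodes G) \<Gamma> y)"
    using ends by metis
qed

lemma preserves_walk_ends_arc:
  assumes G: "decision_structure G" and H: "decision_structure H"
    and r0G: "r0 \<notin> lab G ` arcs G" and r0H: "r0 \<notin> lab H ` arcs H"
    and bij: "bij_betw \<Gamma> (nodes G) (nodes H)" and pres: "preserves_walk_ends \<Gamma> G H"
    and uv: "(u, v) \<in> arcs G"
  shows "(\<Gamma> u, \<Gamma> v) \<in> arcs H \<and> lab H (\<Gamma> u, \<Gamma> v) = lab G (u, v)"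
proof -
  let ?l = "lab G (u, v)"
  have inj: "inj_on \<Gamma> (nodes G)" using bij by (simp add: bij_betw_def)
  have u: "u \<in> nodes G" and v: "v \<in> nodes G" using arc_in_nodes[OF G uv] by simp_all
  obtain f where cov: "walk_covers G r0 f" and u_end: "walk_end G f u"
    and v_end: "walk_end G (f(u := ?l)) v" and "v \<noteq> u"
    using uv arc_iff_walk_ends[OF G r0G] by blast
  define f' where "f' = f \<circ> inv_into (nodes G) \<Gamma>"
  have agree: "\<forall>x\<in>nodes G. f' (\<Gamma> x) = f x"
    using inj by (simp add: f'_def)
  note ends = preserves_walk_endsD[OF pres]
  have "walk_covers H r0 f'"
    unfolding walk_covers_def
  proof (intro ballI impI)
    fix y assume "y \<in> nodes H" and "f' y \<noteq> r0"
    then obtain x where x: "x \<in> nodes G" "y = \<Gamma> x"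
      using bij by (metis bij_betw_imp_surj_on imageE)
    then have "walk_end G (f(x := r0)) x"
      using cov agree \<open>f' y \<noteq> r0\<close> by (simp add: walk_covers_def)
    then have "walk_end H (f'(\<Gamma> x := r0)) (\<Gamma> x)"
      using ends[OF agree_fun_upd[OF inj x(1) agree] x(1)] by blast
    then show "walk_end H (f'(y := r0)) y" using x(2) by simp
  qed
  moreover have "walk_end H f' (\<Gamma> u)" using ends[OF agree u] u_end by simp
  moreover have "walk_end H (f'(\<Gamma> u := ?l)) (\<Gamma> v)"
    using ends[OF agree_fun_upd[OF inj u agree] v] v_end by blast
  moreover have "\<Gamma> v \<noteq> \<Gamma> u" using inj u v \<open>v \<noteq> u\<close> by (simp add: inj_on_eq_iff)
  ultimately show ?thesis using arc_iff_walk_ends[OF H r0H] by blast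
qed

definition arc_iso_map ::
    "('g \<Rightarrow> 'h) \<Rightarrow> ('g,'w,'s,'r) dstruct \<Rightarrow> ('h,'w,'s,'r) dstruct \<Rightarrow> bool" where
  "arc_iso_map \<Gamma> G H \<longleftrightarrow> bij_betw \<Gamma> (nodes G) (nodes H) \<and>
     (\<forall>u\<in>nodes G. \<forall>v\<in>nodes G.
        ((u, v) \<in> arcs G \<longleftrightarrow> (\<Gamma> u, \<Gamma> v) \<in> arcs H) \<and>
        ((u, v) \<in> arcs G \<longrightarrow> lab G (u, v) = lab H (\<Gamma> u, \<Gamma> v)))"

lemma arc_iso_iff_arc_iso_map: "arc_iso G H \<longleftrightarrow> (\<exists>\<Gamma>. arc_iso_map \<Gamma> G H)"
  by (simp add: arc_iso_def arc_iso_map_def)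

lemma arc_iso_map_if_preserves_walk_ends:
  assumes G: "decision_structure G" and H: "decision_structure H"
    and r0G: "r0 \<notin> lab G ` arcs G" and r0H: "r0 \<notin> lab H ` arcs H"
    and bij: "bij_betw \<Gamma> (nodes G) (nodes H)" and pres: "preserves_walk_ends \<Gamma> G H"
  shows "arc_iso_map \<Gamma> G H"
  unfolding arc_iso_map_def
proof (intro exI[of _ \<Gamma>] conjI bij ballI)
  fix u v assume u: "u \<in> nodes G" and v: "v \<in> nodes G"
  let ?\<Gamma>' = "inv_into (nodes G) \<Gamma>"
  have "(?\<Gamma>' (\<Gamma> u), ?\<Gamma>' (\<Gamma> v)) \<in> arcs G" if "(\<Gamma> u, \<Gamma> v) \<in> arcs H"
    using preserves_walk_ends_arc[OF H G r0H r0G bij_betw_inv_into[OF bij]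
        preserves_walk_ends_inv[OF bij pres] that] by blast
  then show "(u, v) \<in> arcs G \<longleftrightarrow> (\<Gamma> u, \<Gamma> v) \<in> arcs H"
    using preserves_walk_ends_arc[OF G H r0G r0H bij pres] u v bij
    by (auto simp: bij_betw_inv_into_left)
  show "(u, v) \<in> arcs G \<longrightarrow> lab G (u, v) = lab H (\<Gamma> u, \<Gamma> v)"
    using preserves_walk_ends_arc[OF G H r0G r0H bij pres] by simp
qed

lemma source_arc_iso_map:
  assumes G: "decision_structure G" and H: "decision_structure H" and iso: "arc_iso_map \<Gamma> G H"
  shows "source H = \<Gamma> (source G)"
proof (rule source_eqI[OF H])
  have bij: "bij_betw \<Gamma> (nodes G) (nodes H)" using iso by (simp add: arc_iso_map_def)
  have s: "source G \<in> nodes G" "\<forall>x. (x, source G) \<notin> arcs G"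
    using is_source_source[OF G] by (simp_all add: is_source_def)
  have "(y, \<Gamma> (source G)) \<notin> arcs H" for y
  proof
    assume arc: "(y, \<Gamma> (source G)) \<in> arcs H"
    then obtain x where "x \<in> nodes G" "y = \<Gamma> x"
      using arc_in_nodes[OF H] bij by (metis bij_betw_imp_surj_on imageE)
    then have "(x, source G) \<in> arcs G" using arc s(1) iso by (simp add: arc_iso_map_def)
    then show False using s(2) by blast
  qed
  then show "is_source H (\<Gamma> (source G))"
    using s(1) bij by (simp add: is_source_def bij_betw_apply)
qed

lemma walk_step_arc_iso_map:
  assumes iso: "arc_iso_map \<Gamma> G H" and agree: "\<forall>x\<in>nodes G. f' (\<Gamma> x) = f x"
    and "x \<in> nodes G" "y \<in> nodes G"
  shows "(\<Gamma> x, \<Gamma> y) \<in> walk_step H f' \<longleftrightarrow> (x, y) \<in> walk_step G f"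
  using assms unfolding arc_iso_map_def walk_step_def by auto

lemma walk_end_arc_iso_map:
  assumes G: "decision_structure G" and H: "decision_structure H" and iso: "arc_iso_map \<Gamma> G H"
    and agree: "\<forall>x\<in>nodes G. f' (\<Gamma> x) = f x" and x_end: "walk_end G f x"
  shows "walk_end H f' (\<Gamma> x)"
proof -
  have "(source G, x) \<in> (walk_step G f)\<^sup>*" using x_end by (simp add: walk_end_def)
  then have "(source H, \<Gamma> x) \<in> (walk_step H f')\<^sup>*"
  proof (induction rule: rtrancl_induct)
    case base
    then show ?case by (simp add: source_arc_iso_map[OF G H iso])
  next
    case (step a b)
    have "a \<in> nodes G" "b \<in> nodes G" using step.hyps(2) walk_step_subset_arcs arc_in_nodes[OF G] by blast+
    then have "(\<Gamma> a, \<Gamma> b) \<in> walk_step H f'"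
      using walk_step_arc_iso_map[OF iso agree] step.hyps(2) by blast
    with step.IH show ?case by simp
  qed
  moreover have "\<Gamma> x \<notin> Domain (walk_step H f')"
  proof
    assume "\<Gamma> x \<in> Domain (walk_step H f')"
    then obtain y' where xy': "(\<Gamma> x, y') \<in> walk_step H f'" by blast
    then have "y' \<in> nodes H" using walk_step_subset_arcs arc_in_nodes[OF H] by blast
    then obtain y where y: "y \<in> nodes G" "y' = \<Gamma> y"
      using iso unfolding arc_iso_map_def by (metis bij_betw_imp_surj_on imageE)
    then have "(x, y) \<in> walk_step G f"
      using walk_step_arc_iso_map[OF iso agree walk_end_in_nodes[OF G x_end]] xy' by blast
    then show False using x_end by (auto simp: walk_end_def)
  qed
  ultimately show ?thesis by (simp add: walk_end_def)
qed

lemma preserves_walk_ends_if_arc_iso_map: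
  assumes G: "decision_structure G" and H: "decision_structure H" and iso: "arc_iso_map \<Gamma> G H"
  shows "preserves_walk_ends \<Gamma> G H"
  using iso walk_end_arc_iso_map[OF G H iso]
  by (intro preserves_walk_endsI[OF G H]) (simp_all add: arc_iso_map_def)

lemma preserves_walk_ends_if_struct_equiv:
  fixes G :: "('g,'w,'s,'r) dstruct" and H :: "('h,'w,'s,'r) dstruct"
  assumes G: "decision_structure G" and H: "decision_structure H" and s12: "(s1 :: 's) \<noteq> s2"
    and g: "bij_betw g {..<n} (nodes G)" and h: "bij_betw h {..<n} (nodes H)"
    and eq: "\<forall>\<alpha> :: nat \<Rightarrow> ('w,'s,'r) action. \<forall>w.
               selected (G\<lparr>act := (\<lambda>v. \<alpha> (inv_into {..<n} g v))\<rparr>) w =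
               selected (H\<lparr>act := (\<lambda>v. \<alpha> (inv_into {..<n} h v))\<rparr>) w"
  shows "preserves_walk_ends (h \<circ> inv_into {..<n} g) G H"
proof -
  let ?iG = "inv_into {..<n} g" and ?iH = "inv_into {..<n} h"
  have bij: "bij_betw (h \<circ> ?iG) (nodes G) (nodes H)"
    using bij_betw_trans[OF bij_betw_inv_into[OF g] h] .
  have iG: "?iG x < n" "g (?iG x) = x" if "x \<in> nodes G" for x
    using bij_betw_apply[OF bij_betw_inv_into[OF g] that] bij_betw_inv_into_right[OF g that] by simp_all
  have iH: "?iH y < n" "h (?iH y) = y" if "y \<in> nodes H" for y
    using bij_betw_apply[OF bij_betw_inv_into[OF h] that] bij_betw_inv_into_right[OF h that] by simp_all
  have g_inv: "?iG (g i) = i" if "i < n" for i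
    using g that by (simp add: bij_betw_inv_into_left)
  show ?thesis
  proof (rule preserves_walk_endsI[OF G H bij])
    fix f :: "'g \<Rightarrow> 'r" and f' :: "'h \<Rightarrow> 'r" and x
    assume agree: "\<forall>x\<in>nodes G. f' ((h \<circ> ?iG) x) = f x" and x_end: "walk_end G f x"
    have x: "x \<in> nodes G" using walk_end_in_nodes[OF G x_end] .
    obtain y where y_end: "walk_end H f' y" using walk_end_exists[OF H] by blast
    have y: "y \<in> nodes H" using walk_end_in_nodes[OF H y_end] .
    fix w :: 'w
    \<comment> \<open>return values replay f, signals mark the index of the endpoint x\<close>
    define \<alpha> :: "nat \<Rightarrow> ('w,'s,'r) action" where
      "\<alpha> i = ((\<lambda>_. if i = ?iG x then s2 else s1), (\<lambda>_. f (g i)))" for i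
    let ?G = "G\<lparr>act := (\<lambda>v. \<alpha> (?iG v))\<rparr>" and ?H = "H\<lparr>act := (\<lambda>v. \<alpha> (?iH v))\<rparr>"
    have "\<forall>z\<in>nodes G. snd (act ?G z) w = f z" by (simp add: \<alpha>_def iG)
    from walk_end_cong[OF G this] have "walk_end ?G (\<lambda>z. snd (act ?G z) w) x"
      using x_end by simp
    then have "selected ?G w = \<alpha> (?iG x)" using selected_eq_walk_end[of ?G w x] G by simp
    moreover have "\<forall>z\<in>nodes H. snd (act ?H z) w = f' z"
    proof
      fix z assume z: "z \<in> nodes H"
      have "g (?iH z) \<in> nodes G" using g iH(1)[OF z] by (simp add: bij_betw_apply)
      then have "f (g (?iH z)) = f' (h (?iG (g (?iH z))))" using agree by simp
      also have "\<dots> = f' z" using g_inv[OF iH(1)[OF z]] iH(2)[OF z] by simp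
      finally show "snd (act ?H z) w = f' z" by (simp add: \<alpha>_def)
    qed
    from walk_end_cong[OF H this] have "walk_end ?H (\<lambda>z. snd (act ?H z) w) y"
      using y_end by simp
    then have "selected ?H w = \<alpha> (?iH y)" using selected_eq_walk_end[of ?H w y] H by simp
    ultimately have "fst (\<alpha> (?iG x)) w = fst (\<alpha> (?iH y)) w" using eq by simp
    then have "?iH y = ?iG x" using s12 by (simp add: \<alpha>_def split: if_splits)
    then have "y = (h \<circ> ?iG) x" using iH(2)[OF y] by simp
    then show "walk_end H f' ((h \<circ> ?iG) x)" using y_end by simp
  qed
qed

lemma struct_equiv_if_preserves_walk_ends:
  fixes G :: "('g,'w,'s,'r) dstruct" and H :: "('h,'w,'s,'r) dstruct"
  assumes G: "decision_structure G" and H: "decision_structure H"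
    and bij: "bij_betw \<Gamma> (nodes G) (nodes H)" and pres: "preserves_walk_ends \<Gamma> G H"
  shows "struct_equiv G H"
proof -
  define n where "n = card (nodes G)"
  obtain g where g: "bij_betw g {..<n} (nodes G)"
    using ex_bij_betw_nat_finite[OF finite_nodes[OF G]] by (auto simp: n_def lessThan_atLeast0)
  define h where "h = \<Gamma> \<circ> g"
  have h: "bij_betw h {..<n} (nodes H)" unfolding h_def using bij_betw_trans[OF g bij] .
  let ?iG = "inv_into {..<n} g" and ?iH = "inv_into {..<n} h"
  have iH_\<Gamma>: "?iH (\<Gamma> x) = ?iG x" if "x \<in> nodes G" for x
  proof -
    have "?iG x < n" "g (?iG x) = x"
      using bij_betw_apply[OF bij_betw_inv_into[OF g] that] bij_betw_inv_into_right[OF g that] by simp_all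
    then show ?thesis using bij_betw_inv_into_left[OF h] by (metis comp_apply h_def lessThan_iff)
  qed
  have "selected (G\<lparr>act := (\<lambda>v. \<alpha> (?iG v))\<rparr>) w = selected (H\<lparr>act := (\<lambda>v. \<alpha> (?iH v))\<rparr>) w"
    (is "selected ?G w = selected ?H w") for \<alpha> :: "nat \<Rightarrow> ('w,'s,'r) action" and w
  proof -
    obtain z where z: "walk_end G (\<lambda>x. snd (\<alpha> (?iG x)) w) z" using walk_end_exists[OF G] by blast
    have z_node: "z \<in> nodes G" using walk_end_in_nodes[OF G] z by simp
    have "\<forall>x\<in>nodes G. snd (\<alpha> (?iH (\<Gamma> x))) w = snd (\<alpha> (?iG x)) w" using iH_\<Gamma> by simp
    with preserves_walk_endsD[OF pres, where f' = "\<lambda>y. snd (\<alpha> (?iH y)) w"]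
    have "walk_end ?H (\<lambda>y. snd (act ?H y) w) (\<Gamma> z)" using z_node z by simp
    then have "selected ?H w = \<alpha> (?iH (\<Gamma> z))" using selected_eq_walk_end[of ?H w] H by simp
    moreover have "selected ?G w = \<alpha> (?iG z)" using selected_eq_walk_end[of ?G w z] G z by simp
    ultimately show ?thesis using iH_\<Gamma>[OF z_node] by simp
  qed
  then show ?thesis
    unfolding struct_equiv_def n_def[symmetric]
    using bij_betw_same_card[OF bij] g h by (intro conjI exI[of _ g] exI[of _ h] allI) (simp_all add: n_def)
qed

lemma struct_equiv_iff_preserves_walk_ends:
  fixes G :: "('g,'w,'s,'r) dstruct" and H :: "('h,'w,'s,'r) dstruct"
  assumes G: "decision_structure G" and H: "decision_structure H" and "\<exists>s1 s2 :: 's. s1 \<noteq> s2"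
  shows "struct_equiv G H \<longleftrightarrow> (\<exists>\<Gamma>. bij_betw \<Gamma> (nodes G) (nodes H) \<and> preserves_walk_ends \<Gamma> G H)"
proof
  assume "struct_equiv G H"
  then obtain g h where g: "bij_betw g {..<card (nodes G)} (nodes G)"
    and h: "bij_betw h {..<card (nodes G)} (nodes H)"
    and eq: "\<forall>\<alpha> :: nat \<Rightarrow> ('w,'s,'r) action. \<forall>w.
               selected (G\<lparr>act := (\<lambda>v. \<alpha> (inv_into {..<card (nodes G)} g v))\<rparr>) w =
               selected (H\<lparr>act := (\<lambda>v. \<alpha> (inv_into {..<card (nodes G)} h v))\<rparr>) w"
    unfolding struct_equiv_def by blast
  obtain s1 s2 :: 's where "s1 \<noteq> s2" using assms(3) by blast
  then show "\<exists>\<Gamma>. bij_betw \<Gamma> (nodes G) (nodes H) \<and> preserves_walk_ends \<Gamma> G H"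
    using preserves_walk_ends_if_struct_equiv[OF G H _ g h eq]
      bij_betw_trans[OF bij_betw_inv_into[OF g] h] by blast
qed (use struct_equiv_if_preserves_walk_ends[OF G H] in blast)

lemma arc_iso_iff_preserves_walk_ends:
  assumes G: "decision_structure G" and H: "decision_structure H"
    and "\<exists>r. r \<notin> lab G ` arcs G \<and> r \<notin> lab H ` arcs H"
  shows "arc_iso G H \<longleftrightarrow> (\<exists>\<Gamma>. bij_betw \<Gamma> (nodes G) (nodes H) \<and> preserves_walk_ends \<Gamma> G H)"
proof -
  obtain r0 where "r0 \<notin> lab G ` arcs G" "r0 \<notin> lab H ` arcs H" using assms(3) by blast
  note iso_if_pres = arc_iso_map_if_preserves_walk_ends[OF G H this]
  show ?thesis
    unfolding arc_iso_iff_arc_iso_map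
  proof (intro iffI; elim exE conjE)
    fix \<Gamma> assume "arc_iso_map \<Gamma> G H"
    then show "\<exists>\<Gamma>. bij_betw \<Gamma> (nodes G) (nodes H) \<and> preserves_walk_ends \<Gamma> G H"
      using preserves_walk_ends_if_arc_iso_map[OF G H] by (auto simp: arc_iso_map_def)
  next
    fix \<Gamma> assume "bij_betw \<Gamma> (nodes G) (nodes H)" "preserves_walk_ends \<Gamma> G H"
    then show "\<exists>\<Gamma>. arc_iso_map \<Gamma> G H" using iso_if_pres by blast
  qed
qed

theorem mainTheorem2:
  fixes G :: "('g,'w,'s,'r) dstruct" and H :: "('h,'w,'s,'r) dstruct"
  assumes "decision_structure G" and "decision_structure H"
    and "\<exists>s1 s2 :: 's. s1 \<noteq> s2"
    and "\<exists>r :: 'r. r \<notin> lab G ` arcs G \<and> r \<notin> lab H ` arcs H"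
  shows "struct_equiv G H \<longleftrightarrow> arc_iso G H"
  using struct_equiv_iff_preserves_walk_ends[OF assms(1-3)]
    arc_iso_iff_preserves_walk_ends[OF assms(1,2,4)] by simp

end
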